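(* Let $\mathbf C$ be an admissible category of lattices and $L$ a convergence $\mathbf C$-object. The map $\epsilon_L:L\to\mathbb P(\mathrm{pt}\,L)$, $\epsilon_L(\ell)=\ell^\bullet$, is a morphism in $\mathbf C^{\mathrm{conv}}$ and is final, i.e. $\lim_{\mathbb P(\mathrm{pt}\,L)}\mathcal F=\epsilon_L(\lim_L\epsilon_L^{-1}(\mathcal F))$ for every filter $\mathcal F$ of subsets of $\mathrm{pt}\,L$.
   Context: A filter on an inf-semilattice $L$ is a non-empty upward-closed subset closed under binary meets ($L$ itself allowed); $\mathbb F L$ is the set of filters. A category of lattices has lattices as objects and morphisms preserving finite suprema and infima; it is admissible if every powerset $\mathbb P(X)$ is an object and there are classes of index sets $\mathcal I,\mathcal J$ such that morphisms $L\to L'$ are exactly monotone maps preserving all existing $I$-indexed infima ($I\in\mathcal I$) and $J$-indexed suprema ($J\in\mathcal J$). A convergence $\mathbf C$-object is $(L,\lim_L)$ with $\lim_L:\mathbb F L\to L$ monotone; morphisms $\varphi:L\to L'$ of $\mathbf C^{\mathrm{conv}}$ are $\mathbf C$-morphisms with $\lim_{L'}\mathcal F\le\varphi(\lim_L\varphi^{-1}(\mathcal F))$ for all $\mathcal F\in\mathbb F L'$. With $\mathbb P(1)=\{\emptyset,\{*\}\}$ and $\lim_{\mathbb P(1)}$ constantly $\{*\}$, $\mathrm{pt}\,L$ is the set of $\mathbf C^{\mathrm{conv}}$-morphisms $L\to\mathbb P(1)$ and $\ell^\bullet=\{\psi\in\mathrm{pt}\,L:\psi(\ell)=\{*\}\}$.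 The powerset $\mathbb P(\mathrm{pt}\,L)$ carries $\lim_{\mathbb P(\mathrm{pt}\,L)}\mathcal F=(\lim_L\{\ell\in L:\ell^\bullet\in\mathcal F\})^\bullet$. *)

theory Defs
  imports Main
begin

text \<open>Lattices are handled relative to a carrier set A, ordered by the ambient
order of the type. For the convergence object L the carrier is UNIV of a type of
class lattice; for the powerset P(X) the carrier is Pow X ordered by inclusion;
P(1) is UNIV of type unit set.\<close>

definition is_lb_in :: "'a::order set \<Rightarrow> 'a set \<Rightarrow> 'a \<Rightarrow> bool" where
  "is_lb_in A S m \<longleftrightarrow> m \<in> A \<and> (\<forall>s\<in>S. m \<le> s)"

definition is_ub_in :: "'a::order set \<Rightarrow> 'a set \<Rightarrow> 'a \<Rightarrow> bool" where
  "is_ub_in A S m \<longleftrightarrow> m \<in> A \<and> (\<forall>s\<in>S. s \<le> m)"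

definition is_glb_in :: "'a::order set \<Rightarrow> 'a set \<Rightarrow> 'a \<Rightarrow> bool" where
  "is_glb_in A S m \<longleftrightarrow> is_lb_in A S m \<and> (\<forall>z. is_lb_in A S z \<longrightarrow> z \<le> m)"

definition is_lub_in :: "'a::order set \<Rightarrow> 'a set \<Rightarrow> 'a \<Rightarrow> bool" where
  "is_lub_in A S m \<longleftrightarrow> is_ub_in A S m \<and> (\<forall>z. is_ub_in A S z \<longrightarrow> m \<le> z)"

definition is_filter_in :: "'a::order set \<Rightarrow> 'a set \<Rightarrow> bool" where
  "is_filter_in A F \<longleftrightarrow> F \<subseteq> A \<and> F \<noteq> {}
     \<and> (\<forall>x\<in>F. \<forall>y\<in>A. x \<le> y \<longrightarrow> y \<in> F)
     \<and> (\<forall>x\<in>F. \<forall>y\<in>F. \<forall>m. is_glb_in A {x, y} m \<longrightarrow> m \<in> F)"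

definition preserves_inf_idx ::
  "'i set \<Rightarrow> 'a::order set \<Rightarrow> 'b::order set \<Rightarrow> ('a \<Rightarrow> 'b) \<Rightarrow> bool" where
  "preserves_inf_idx I A B \<phi> \<longleftrightarrow>
     (\<forall>x::'i \<Rightarrow> 'a. x ` I \<subseteq> A \<longrightarrow>
        (\<forall>m. is_glb_in A (x ` I) m \<longrightarrow> is_glb_in B ((\<lambda>i. \<phi> (x i)) ` I) (\<phi> m)))"

definition preserves_sup_idx ::
  "'i set \<Rightarrow> 'a::order set \<Rightarrow> 'b::order set \<Rightarrow> ('a \<Rightarrow> 'b) \<Rightarrow> bool" where
  "preserves_sup_idx I A B \<phi> \<longleftrightarrow>
     (\<forall>x::'i \<Rightarrow> 'a. x ` I \<subseteq> A \<longrightarrow>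
        (\<forall>m. is_lub_in A (x ` I) m \<longrightarrow> is_lub_in B ((\<lambda>i. \<phi> (x i)) ` I) (\<phi> m)))"

text \<open>Morphisms of the admissible category C determined by the index classes
II and JJ: monotone maps preserving finite suprema and infima (as required of
a category of lattices) and all existing I-indexed infima (I in II) and
J-indexed suprema (J in JJ).\<close>
definition C_mor ::
  "'i set set \<Rightarrow> 'j set set \<Rightarrow> 'a::order set \<Rightarrow> 'b::order set \<Rightarrow> ('a \<Rightarrow> 'b) \<Rightarrow> bool" where
  "C_mor II JJ A B \<phi> \<longleftrightarrow>
     \<phi> ` A \<subseteq> B
     \<and> (\<forall>x\<in>A. \<forall>y\<in>A. x \<le> y \<longrightarrow> \<phi> x \<le> \<phi> y)
     \<and> (\<forall>S. finite S \<longrightarrow> S \<subseteq> A \<longrightarrow> (\<forall>m. is_glb_in A S m \<longrightarrow> is_glb_in B (\<phi> ` S) (\<phi> m)))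
     \<and> (\<forall>S. finite S \<longrightarrow> S \<subseteq> A \<longrightarrow> (\<forall>m. is_lub_in A S m \<longrightarrow> is_lub_in B (\<phi> ` S) (\<phi> m)))
     \<and> (\<forall>I\<in>II. preserves_inf_idx I A B \<phi>)
     \<and> (\<forall>J\<in>JJ. preserves_sup_idx J A B \<phi>)"

definition conv_mor ::
  "'i set set \<Rightarrow> 'j set set \<Rightarrow> 'a::order set \<Rightarrow> ('a set \<Rightarrow> 'a)
     \<Rightarrow> 'b::order set \<Rightarrow> ('b set \<Rightarrow> 'b) \<Rightarrow> ('a \<Rightarrow> 'b) \<Rightarrow> bool" where
  "conv_mor II JJ A limA B limB \<phi> \<longleftrightarrow>
     C_mor II JJ A B \<phi>
     \<and> (\<forall>F. is_filter_in B F \<longrightarrow> limB F \<le> \<phi> (limA {l \<in> A. \<phi> l \<in> F}))"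

definition lim_P1 :: "unit set set \<Rightarrow> unit set" where
  "lim_P1 F = {()}"

definition pt :: "'i set set \<Rightarrow> 'j set set \<Rightarrow> ('a::lattice set \<Rightarrow> 'a) \<Rightarrow> ('a \<Rightarrow> unit set) set" where
  "pt II JJ limL = {\<psi>. conv_mor II JJ (UNIV::'a set) limL (UNIV::unit set set) lim_P1 \<psi>}"

definition bullet :: "'i set set \<Rightarrow> 'j set set \<Rightarrow> ('a::lattice set \<Rightarrow> 'a) \<Rightarrow> 'a \<Rightarrow> ('a \<Rightarrow> unit set) set" where
  "bullet II JJ limL l = {\<psi> \<in> pt II JJ limL. \<psi> l = {()}}"

definition lim_Ppt :: "'i set set \<Rightarrow> 'j set set \<Rightarrow> ('a::lattice set \<Rightarrow> 'a)
    \<Rightarrow> ('a \<Rightarrow> unit set) set set \<Rightarrow> ('a \<Rightarrow> unit set) set" where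
  "lim_Ppt II JJ limL F = bullet II JJ limL (limL {l. bullet II JJ limL l \<in> F})"

end

theory Submission
  imports Defs
begin

text \<open>A point \<psi> of L sends every existing meet or join to the corresponding meet or join
in the two-element lattice P(1), i.e. to an intersection or union. Hence the extent
of a meet or join of L is the intersection or union of the extents, which is
exactly the meet or join in P(pt L); so the map l \<mapsto> l\<bullet> preserves all the structure a point does.
The convergence condition holds with equality, since the limit on P(pt L) is
defined by transporting the limit of L along this map.\<close>

lemma is_glb_in_UNIV_iff:
  fixes m :: "'a::complete_lattice"
  shows "is_glb_in UNIV S m \<longleftrightarrow> m = Inf S"
  unfolding is_glb_in_def is_lb_in_def
  by (metis Inf_greatest Inf_lower UNIV_I order_antisym)

lemma is_lub_in_UNIV_iff:
  fixes m :: "'a::complete_lattice"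
  shows "is_lub_in UNIV S m \<longleftrightarrow> m = Sup S"
  unfolding is_lub_in_def is_ub_in_def
  by (metis Sup_least Sup_upper UNIV_I order_antisym)

lemma is_glb_in_Pow_iff: "is_glb_in (Pow P) S M \<longleftrightarrow> M = P \<inter> \<Inter>S"
  by (auto simp: is_glb_in_def is_lb_in_def)

lemma is_lub_in_Pow_iff: "is_lub_in (Pow P) S M \<longleftrightarrow> \<Union>S \<subseteq> P \<and> M = \<Union>S"
proof
  assume lub: "is_lub_in (Pow P) S M"
  then have "\<Union>S \<subseteq> M" "M \<subseteq> P" by (auto simp: is_lub_in_def is_ub_in_def)
  moreover have "is_ub_in (Pow P) S (\<Union>S)"
    using calculation by (auto simp: is_ub_in_def)
  then have "M \<subseteq> \<Union>S"
    using lub unfolding is_lub_in_def by blast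
  ultimately show "\<Union>S \<subseteq> P \<and> M = \<Union>S" by blast
qed (auto simp: is_lub_in_def is_ub_in_def)

lemma unit_set_eq_singleton_iff: "(u::unit set) = {()} \<longleftrightarrow> () \<in> u"
  by auto

lemma C_mor_mono: "C_mor II JJ A B \<phi> \<Longrightarrow> x \<in> A \<Longrightarrow> y \<in> A \<Longrightarrow> x \<le> y \<Longrightarrow> \<phi> x \<le> \<phi> y"
  by (simp add: C_mor_def)

lemma C_mor_glb:
  "C_mor II JJ A B \<phi> \<Longrightarrow> finite S \<Longrightarrow> S \<subseteq> A \<Longrightarrow> is_glb_in A S m \<Longrightarrow> is_glb_in B (\<phi> ` S) (\<phi> m)"
  by (simp add: C_mor_def)

lemma C_mor_lub:
  "C_mor II JJ A B \<phi> \<Longrightarrow> finite S \<Longrightarrow> S \<subseteq> A \<Longrightarrow> is_lub_in A S m \<Longrightarrow> is_lub_in B (\<phi> ` S) (\<phi> m)"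
  by (simp add: C_mor_def)

lemma C_mor_preserves_inf_idx: "C_mor II JJ A B \<phi> \<Longrightarrow> I \<in> II \<Longrightarrow> preserves_inf_idx I A B \<phi>"
  by (simp add: C_mor_def)

lemma C_mor_preserves_sup_idx: "C_mor II JJ A B \<phi> \<Longrightarrow> J \<in> JJ \<Longrightarrow> preserves_sup_idx J A B \<phi>"
  by (simp add: C_mor_def)

definition extent :: "('a \<Rightarrow> unit set) set \<Rightarrow> 'a \<Rightarrow> ('a \<Rightarrow> unit set) set" where
  "extent P l = {\<psi> \<in> P. \<psi> l = {()}}"

lemma extent_preserves_glb:
  assumes "\<And>\<psi>. \<psi> \<in> P \<Longrightarrow> is_glb_in UNIV (\<psi> ` T) (\<psi> m)"
  shows "is_glb_in (Pow P) (extent P ` T) (extent P m)"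
  using assms by (auto simp: is_glb_in_UNIV_iff is_glb_in_Pow_iff extent_def unit_set_eq_singleton_iff)

lemma extent_preserves_lub:
  assumes "\<And>\<psi>. \<psi> \<in> P \<Longrightarrow> is_lub_in UNIV (\<psi> ` T) (\<psi> m)"
  shows "is_lub_in (Pow P) (extent P ` T) (extent P m)"
  using assms by (auto simp: is_lub_in_UNIV_iff is_lub_in_Pow_iff extent_def unit_set_eq_singleton_iff)

lemma preserves_inf_idx_extent:
  assumes "\<And>\<psi>. \<psi> \<in> P \<Longrightarrow> preserves_inf_idx I A UNIV \<psi>"
  shows "preserves_inf_idx I A (Pow P) (extent P)"
  unfolding preserves_inf_idx_def
proof (intro allI impI)
  fix x m assume "x ` I \<subseteq> A" "is_glb_in A (x ` I) m"
  then have "is_glb_in UNIV (\<psi> ` x ` I) (\<psi> m)" if "\<psi> \<in> P" for \<psi>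
    using assms[OF that] by (simp add: preserves_inf_idx_def image_image)
  then show "is_glb_in (Pow P) ((\<lambda>i. extent P (x i)) ` I) (extent P m)"
    using extent_preserves_glb[of P "x ` I" m] by (simp add: image_image)
qed

lemma preserves_sup_idx_extent:
  assumes "\<And>\<psi>. \<psi> \<in> P \<Longrightarrow> preserves_sup_idx J A UNIV \<psi>"
  shows "preserves_sup_idx J A (Pow P) (extent P)"
  unfolding preserves_sup_idx_def
proof (intro allI impI)
  fix x m assume "x ` J \<subseteq> A" "is_lub_in A (x ` J) m"
  then have "is_lub_in UNIV (\<psi> ` x ` J) (\<psi> m)" if "\<psi> \<in> P" for \<psi>
    using assms[OF that] by (simp add: preserves_sup_idx_def image_image)
  then show "is_lub_in (Pow P) ((\<lambda>i. extent P (x i)) ` J) (extent P m)"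
    using extent_preserves_lub[of P "x ` J" m] by (simp add: image_image)
qed

lemma C_mor_extent:
  assumes "\<And>\<psi>. \<psi> \<in> P \<Longrightarrow> C_mor II JJ A UNIV \<psi>"
  shows "C_mor II JJ A (Pow P) (extent P)"
  unfolding C_mor_def
proof (intro conjI ballI allI impI)
  show "extent P ` A \<subseteq> Pow P"
    by (auto simp: extent_def)
next
  fix x y assume "x \<in> A" "y \<in> A" "x \<le> y"
  then have "\<psi> x \<le> \<psi> y" if "\<psi> \<in> P" for \<psi>
    using assms[OF that] C_mor_mono by blast
  then show "extent P x \<le> extent P y"
    unfolding extent_def unit_set_eq_singleton_iff by blast
next
  fix S m assume "finite S" "S \<subseteq> A" "is_glb_in A S m"
  then show "is_glb_in (Pow P) (extent P ` S) (extent P m)"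
    by (intro extent_preserves_glb C_mor_glb[OF assms])
next
  fix S m assume "finite S" "S \<subseteq> A" "is_lub_in A S m"
  then show "is_lub_in (Pow P) (extent P ` S) (extent P m)"
    by (intro extent_preserves_lub C_mor_lub[OF assms])
next
  fix I assume "I \<in> II"
  then show "preserves_inf_idx I A (Pow P) (extent P)"
    by (intro preserves_inf_idx_extent C_mor_preserves_inf_idx[OF assms])
next
  fix J assume "J \<in> JJ"
  then show "preserves_sup_idx J A (Pow P) (extent P)"
    by (intro preserves_sup_idx_extent C_mor_preserves_sup_idx[OF assms])
qed

lemma bullet_eq_extent: "bullet II JJ limL = extent (pt II JJ limL)"
  by (simp add: fun_eq_iff bullet_def extent_def)

theorem mainTheorem5:
  fixes II :: "'i set set" and JJ :: "'j set set"
    and limL :: "'a::lattice set \<Rightarrow> 'a"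
  assumes lim_mono: "\<And>F G. is_filter_in (UNIV::'a set) F \<Longrightarrow> is_filter_in (UNIV::'a set) G
                        \<Longrightarrow> F \<subseteq> G \<Longrightarrow> limL F \<le> limL G"
  shows "conv_mor II JJ (UNIV::'a set) limL (Pow (pt II JJ limL)) (lim_Ppt II JJ limL)
            (bullet II JJ limL)
         \<and> (\<forall>F. is_filter_in (Pow (pt II JJ limL)) F \<longrightarrow>
               lim_Ppt II JJ limL F = bullet II JJ limL (limL {l. bullet II JJ limL l \<in> F}))"
proof -
  have "C_mor II JJ UNIV (Pow (pt II JJ limL)) (bullet II JJ limL)"
    unfolding bullet_eq_extent by (rule C_mor_extent) (simp add: pt_def conv_mor_def)
  then show ?thesis
    by (simp add: conv_mor_def lim_Ppt_def)
qed

end
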